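(* Let $\mathbf{X}=\mathbf{D}_1\boldsymbol{\Gamma}_1$ with $\boldsymbol{\Gamma}_1\neq 0$, and $\mathbf{Y}=\mathbf{X}+\mathbf{E}$ with $\|\mathbf{E}\|_{2,\infty}^{p}\le\epsilon_0$. Let $|\Gamma_1^{\min}|$ and $|\Gamma_1^{\max}|$ be the smallest and largest absolute values of the nonzero entries of $\boldsymbol{\Gamma}_1$. Let $\hat{\boldsymbol{\Gamma}}_1=\mathcal{H}_{\beta_1}(\mathbf{D}_1^T\mathbf{Y})$. Assume (a) $\|\boldsymbol{\Gamma}_1\|_{0,\infty}^{s}<\tfrac12\Big(1+\tfrac{1}{\mu(\mathbf{D}_1)}\tfrac{|\Gamma_1^{\min}|}{|\Gamma_1^{\max}|}\Big)-\tfrac{1}{\mu(\mathbf{D}_1)}\tfrac{\epsilon_0}{|\Gamma_1^{\max}|}$; and (b) $|\Gamma_1^{\min}|-(\|\boldsymbol{\Gamma}_1\|_{0,\infty}^{s}-1)\mu(\mathbf{D}_1)|\Gamma_1^{\max}|-\epsilon_0>\beta_1>\|\boldsymbol{\Gamma}_1\|_{0,\infty}^{s}\mu(\mathbf{D}_1)|\Gamma_1^{\max}|+\epsilon_0$. Then (1) the support of $\hat{\boldsymbol{\Gamma}}_1$ equals the support of $\boldsymbol{\Gamma}_1$; and (2) $\|\boldsymbol{\Gamma}_1-\hat{\boldsymbol{\Gamma}}_1\|_{2,\infty}^{p}\le\sqrt{\|\boldsymbol{\Gamma}_1\|_{0,\infty}^{p}}\,\big(\epsilon_0+\mu(\mathb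f{D}_1)(\|\boldsymbol{\Gamma}_1\|_{0,\infty}^{s}-1)|\Gamma_1^{\max}|\big)$.
   Context: Setting. Signals are one-dimensional of length $N$ with periodic boundary conditions; $m_0=1$, $\boldsymbol{\Gamma}_0=\mathbf{X}$. For $i\ge1$, $\boldsymbol{\Gamma}_i\in\mathbb{R}^{Nm_i}$ has entry $km_i+r$ equal to the coefficient of filter $r$ at spatial shift $k$. $\mathbf{D}_i\in\mathbb{R}^{Nm_{i-1}\times Nm_i}$ is a (stride) convolutional dictionary whose column $km_i+r$ is local filter $r$ (length $n_{i-1}m_{i-1}$) placed cyclically on entries $km_{i-1},\dots,km_{i-1}+n_{i-1}m_{i-1}-1$, zero elsewhere; in particular $\mathbf{D}_1\in\mathbb{R}^{N\times Nm_1}$ consists of all cyclic shifts of $m_1$ filters of length $n_0$. Columns have unit $\ell_2$ norm; $\mu(\mathbf{D})=\max_{i\neq j}|\mathbf{d}_i^T\mathbf{d}_j|$. Stripes: $\mathbf{S}_{i,j}\boldsymbol{\Gamma}_i$ is the subvector of $\boldsymbol{\Gamma}_i$ at spatial shifts $k\in\{j-n_{i-1}+1,\dots,j+n_{i-1}-1\}$ (mod $N$), all channels (length $(2n_{i-1}-1)m_i$); $\|\boldsymbol{\Gamma}_i\|_{0,\infty}^{s}=\max_j\|\mathbf{S}_{i,j}\boldsymbol{\Gamma}_i\|_0$. Patches: for $i\ge0$, $\mathbf{P}_{i,j}\mathbf{V}$ extracts from $\mathbf{V}\in\mathbb{R}^{Nm_i}$ the cyclically contiguous subvector of length $n_im_i$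 at spatial shifts $j,\dots,j+n_i-1$ (all channels). $\|\mathbf{V}\|_{2,\infty}^{p}=\max_j\|\mathbf{P}_{i,j}\mathbf{V}\|_2$ and $\|\mathbf{V}\|_{0,\infty}^{p}=\max_j\|\mathbf{P}_{i,j}\mathbf{V}\|_0$ (for $\mathbf{E}\in\mathbb{R}^N$ patches have length $n_0$; for $\boldsymbol{\Gamma}_1$ they have length $n_1m_1$). Hard thresholding: $\mathcal{H}_\beta$ acts entrywise, $\mathcal{H}_\beta(z)=z$ if $|z|>\beta$ and $0$ otherwise. *)

theory Defs
  imports Complex_Main
begin

text \<open>Vectors are functions nat => real; a vector of \<open>N\<close> spatial positions with
  \<open>m\<close> channels uses the flat indices \<open>k*m + r\<close> with \<open>k < N\<close>, \<open>r < m\<close>.\<close>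

definition chan_idx :: "nat \<Rightarrow> nat set \<Rightarrow> nat set" where
  "chan_idx m S = {k * m + r | k r. k \<in> S \<and> r < m}"

definition patch_idx :: "nat \<Rightarrow> nat \<Rightarrow> nat \<Rightarrow> nat \<Rightarrow> nat set" where
  "patch_idx N m n j = chan_idx m ((\<lambda>t. (j + t) mod N) ` {..<n})"

definition stripe_idx :: "nat \<Rightarrow> nat \<Rightarrow> nat \<Rightarrow> nat \<Rightarrow> nat set" where
  "stripe_idx N m n0 j =
     chan_idx m ((\<lambda>t. nat ((int j + t) mod int N)) ` {-(int n0 - 1) .. int n0 - 1})"

definition norm0_inf_stripe :: "nat \<Rightarrow> nat \<Rightarrow> nat \<Rightarrow> (nat \<Rightarrow> real) \<Rightarrow> nat" where
  "norm0_inf_stripe N m n0 v = Max ((\<lambda>j. card {a \<in> stripe_idx N m n0 j. v a \<noteq> 0}) ` {..<N})"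

definition norm0_inf_patch :: "nat \<Rightarrow> nat \<Rightarrow> nat \<Rightarrow> (nat \<Rightarrow> real) \<Rightarrow> nat" where
  "norm0_inf_patch N m n v = Max ((\<lambda>j. card {a \<in> patch_idx N m n j. v a \<noteq> 0}) ` {..<N})"

definition norm2_inf_patch :: "nat \<Rightarrow> nat \<Rightarrow> nat \<Rightarrow> (nat \<Rightarrow> real) \<Rightarrow> real" where
  "norm2_inf_patch N m n v = Max ((\<lambda>j. sqrt (\<Sum>a\<in>patch_idx N m n j. (v a)\<^sup>2)) ` {..<N})"

text \<open>Convolutional dictionary D_1 (N x N*m1): column k*m1+r is filter r
  (f r t, t < n0) placed cyclically on entries k, ..., k+n0-1 (mod N).\<close>
definition conv_dict :: "nat \<Rightarrow> nat \<Rightarrow> nat \<Rightarrow> (nat \<Rightarrow> nat \<Rightarrow> real) \<Rightarrow> nat \<Rightarrow> nat \<Rightarrow> real" where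
  "conv_dict N n0 m1 f i a =
     (let k = a div m1; r = a mod m1; t = (i + N - k) mod N
      in if t < n0 then f r t else 0)"

definition mat_vec :: "nat \<Rightarrow> (nat \<Rightarrow> nat \<Rightarrow> real) \<Rightarrow> (nat \<Rightarrow> real) \<Rightarrow> nat \<Rightarrow> real" where
  "mat_vec ncols D v i = (\<Sum>a<ncols. D i a * v a)"

definition matT_vec :: "nat \<Rightarrow> (nat \<Rightarrow> nat \<Rightarrow> real) \<Rightarrow> (nat \<Rightarrow> real) \<Rightarrow> nat \<Rightarrow> real" where
  "matT_vec nrows D v a = (\<Sum>i<nrows. D i a * v i)"

definition coherence :: "nat \<Rightarrow> nat \<Rightarrow> (nat \<Rightarrow> nat \<Rightarrow> real) \<Rightarrow> real" where
  "coherence nrows ncols D = Max (insert 0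
     {\<bar>\<Sum>i<nrows. D i a * D i b\<bar> | a b. a < ncols \<and> b < ncols \<and> a \<noteq> b})"

definition hard_thr :: "real \<Rightarrow> (nat \<Rightarrow> real) \<Rightarrow> nat \<Rightarrow> real" where
  "hard_thr \<beta> v a = (if \<bar>v a\<bar> > \<beta> then v a else 0)"

end

theory Submission
  imports Defs "HOL-Analysis.Convex"
begin

text \<open>Write \<open>D\<^sup>T Y = \<Gamma> + (D\<^sup>T D - I) \<Gamma> + D\<^sup>T E\<close>. Two atoms are correlated only if their
  cyclic supports overlap, so the cross term at an atom \<open>a\<close> involves only the nonzeros of \<open>\<Gamma>\<close> in
  the stripe around \<open>a\<close> other than \<open>a\<close> itself, each contributing at most \<open>\<mu> |\<Gamma>|_max\<close>; the noise
  term is at most \<open>\<epsilon>\<^sub>0\<close> by Cauchy-Schwarz, since a unit-norm atom lives on a single patch of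
  length \<open>n\<^sub>0\<close>. Condition (b) then puts \<open>\<beta>\<^sub>1\<close> strictly between the correlations off and on the
  support, and on the support the entrywise error is at most \<open>\<epsilon>\<^sub>0 + \<mu> (s - 1) |\<Gamma>|_max\<close>, where
  \<open>s\<close> is the stripe sparsity, and the number of support entries in a patch is bounded by the
  patch sparsity.\<close>

lemma chan_idx_one [simp]: "chan_idx 1 S = S"
  unfolding chan_idx_def by auto

lemma mem_chan_idx_iff:
  assumes "0 < m"
  shows "b \<in> chan_idx m S \<longleftrightarrow> b div m \<in> S"
proof
  assume "b \<in> chan_idx m S"
  then obtain k r where "b = k * m + r" "k \<in> S" "r < m" unfolding chan_idx_def by blast
  then show "b div m \<in> S" by simp
next
  assume "b div m \<in> S"
  moreover have "b = b div m * m + b mod m" by simp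
  ultimately show "b \<in> chan_idx m S"
    unfolding chan_idx_def using assms by (metis (mono_tags, lifting) mem_Collect_eq mod_less_divisor)
qed

lemma finite_chan_idx: "finite S \<Longrightarrow> finite (chan_idx m S)"
proof -
  assume "finite S"
  have "chan_idx m S = (\<lambda>(k, r). k * m + r) ` (S \<times> {..<m})" unfolding chan_idx_def by auto
  with \<open>finite S\<close> show ?thesis by simp
qed

lemma chan_idx_subset_lessThan:
  assumes "S \<subseteq> {..<N}"
  shows "chan_idx m S \<subseteq> {..<N * m}"
proof
  fix b assume "b \<in> chan_idx m S"
  then obtain k r where b: "b = k * m + r" "k < N" "r < m" unfolding chan_idx_def using assms by blast
  have "k * m + r < Suc k * m" using b by simp
  also have "\<dots> \<le> N * m" using b by (intro mult_right_mono) auto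
  finally show "b \<in> {..<N * m}" using b by simp
qed

lemma finite_patch_idx: "finite (patch_idx N m n j)"
  unfolding patch_idx_def by (rule finite_chan_idx) auto

lemma finite_stripe_idx: "finite (stripe_idx N m n0 j)"
  unfolding stripe_idx_def by (rule finite_chan_idx) auto

lemma patch_idx_subset: "0 < N \<Longrightarrow> patch_idx N m n j \<subseteq> {..<N * m}"
  unfolding patch_idx_def by (rule chan_idx_subset_lessThan) auto

lemma stripe_idx_subset: "0 < N \<Longrightarrow> stripe_idx N m n0 j \<subseteq> {..<N * m}"
  unfolding stripe_idx_def by (rule chan_idx_subset_lessThan) (auto simp: nat_less_iff)

lemma mem_stripe_idx_self:
  assumes "0 < m" "1 \<le> n0" "a < N * m"
  shows "a \<in> stripe_idx N m n0 (a div m)"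
proof -
  have "a div m < N" using assms by (simp add: less_mult_imp_div_less)
  then have "a div m = nat ((int (a div m) + 0) mod int N)" by simp
  moreover have "(0::int) \<in> {-(int n0 - 1) .. int n0 - 1}" using assms by simp
  ultimately show ?thesis unfolding stripe_idx_def mem_chan_idx_iff[OF assms(1)] by blast
qed

lemma norm0_inf_patch_ge:
  "j < N \<Longrightarrow> card {a \<in> patch_idx N m n j. v a \<noteq> 0} \<le> norm0_inf_patch N m n v"
  unfolding norm0_inf_patch_def by (rule Max_ge) auto

lemma norm0_inf_stripe_ge:
  "j < N \<Longrightarrow> card {a \<in> stripe_idx N m n0 j. v a \<noteq> 0} \<le> norm0_inf_stripe N m n0 v"
  unfolding norm0_inf_stripe_def by (rule Max_ge) auto

lemma norm2_inf_patch_ge: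
  "j < N \<Longrightarrow> sqrt (\<Sum>a\<in>patch_idx N m n j. (v a)\<^sup>2) \<le> norm2_inf_patch N m n v"
  unfolding norm2_inf_patch_def by (rule Max_ge) auto

lemma norm2_inf_patch_nonneg: "0 < N \<Longrightarrow> 0 \<le> norm2_inf_patch N m n v"
  using norm2_inf_patch_ge[where j = 0 and v = v]
  by (meson order_trans real_sqrt_ge_zero sum_nonneg zero_le_power2)

lemma add_mod_cyclic_diff:
  assumes "k < (N::nat)" "i < N"
  shows "(k + (i + N - k) mod N) mod N = i"
proof -
  have "(k + (i + N - k) mod N) mod N = (k + (i + N - k)) mod N" by (simp add: mod_add_right_eq)
  also have "k + (i + N - k) = i + N" using assms by simp
  finally show ?thesis using assms by simp
qed

lemma conv_dict_nonzero_imp: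
  "conv_dict N n0 m f i a \<noteq> 0 \<Longrightarrow> (i + N - a div m) mod N < n0"
  unfolding conv_dict_def Let_def by (auto split: if_splits)

lemma conv_dict_column_support:
  assumes "a div m < N" "i < N" "conv_dict N n0 m f i a \<noteq> 0"
  shows "i \<in> patch_idx N 1 n0 (a div m)"
proof -
  have "(i + N - a div m) mod N < n0" using assms(3) by (rule conv_dict_nonzero_imp)
  moreover have "(a div m + (i + N - a div m) mod N) mod N = i"
    using assms(1,2) by (rule add_mod_cyclic_diff)
  ultimately show ?thesis unfolding patch_idx_def chan_idx_one by force
qed

lemma cyclic_windows_overlap:
  assumes "ka < N" "kb < N" "i < N"
    and "(i + N - ka) mod N < n0" "(i + N - kb) mod N < n0"
  shows "kb \<in> (\<lambda>t. nat ((int ka + t) mod int N)) ` {-(int n0 - 1) .. int n0 - 1}"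
proof -
  define t t' where "t = (i + N - ka) mod N" and "t' = (i + N - kb) mod N"
  have "(ka + t) mod N = (kb + t') mod N"
    using add_mod_cyclic_diff[OF assms(1,3)] add_mod_cyclic_diff[OF assms(2,3)] t_def t'_def by simp
  then have "(int ka + int t) mod int N = (int kb + int t') mod int N"
    by (metis of_nat_add zmod_int)
  then have "(int ka + (int t - int t')) mod int N = int kb mod int N"
    by (metis add.commute add_diff_cancel_left' diff_add_eq mod_diff_left_eq)
  then have "kb = nat ((int ka + (int t - int t')) mod int N)" using assms(2) by simp
  moreover have "int t - int t' \<in> {-(int n0 - 1) .. int n0 - 1}"
    using assms(4,5) t_def t'_def by auto
  ultimately show ?thesis by blast
qed

lemma conv_dict_overlap_in_stripe:
  assumes "0 < m" "a < N * m" "b < N * m" "i < N"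
    and "conv_dict N n0 m f i a \<noteq> 0" "conv_dict N n0 m f i b \<noteq> 0"
  shows "b \<in> stripe_idx N m n0 (a div m)"
  unfolding stripe_idx_def mem_chan_idx_iff[OF assms(1)]
  using assms by (intro cyclic_windows_overlap conv_dict_nonzero_imp)
    (auto simp: less_mult_imp_div_less)

lemma abs_sum_mult_le_sqrt_sum_sq:
  fixes d e :: "'a \<Rightarrow> real"
  assumes "finite A" "P \<subseteq> A" "\<And>i. i \<in> A - P \<Longrightarrow> d i = 0" "(\<Sum>i\<in>A. (d i)\<^sup>2) = 1"
  shows "\<bar>\<Sum>i\<in>A. d i * e i\<bar> \<le> sqrt (\<Sum>i\<in>P. (e i)\<^sup>2)"
proof -
  have restrict: "(\<Sum>i\<in>A. d i * e i) = (\<Sum>i\<in>P. d i * e i)" "(\<Sum>i\<in>P. (d i)\<^sup>2) = 1"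
    using assms sum.mono_neutral_right[OF assms(1,2), of "\<lambda>i. (d i)\<^sup>2"]
    by (auto intro!: sum.mono_neutral_right)
  have "(\<Sum>i\<in>P. d i * e i)\<^sup>2 \<le> (\<Sum>i\<in>P. (e i)\<^sup>2)"
    using Cauchy_Schwarz_ineq_sum[of d e P] restrict(2) by simp
  then show ?thesis unfolding restrict(1) by (metis real_sqrt_abs real_sqrt_le_mono)
qed

lemma finite_gram_abs_set:
  fixes D :: "nat \<Rightarrow> nat \<Rightarrow> real"
  shows "finite {\<bar>\<Sum>i<nrows. D i a * D i b\<bar> | a b. a < ncols \<and> b < ncols \<and> a \<noteq> b}"
  by (rule finite_subset[of _ "(\<lambda>(a, b). \<bar>\<Sum>i<nrows. D i a * D i b\<bar>) ` ({..<ncols} \<times> {..<ncols})"])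
    auto

lemma coherence_nonneg: "0 \<le> coherence nrows ncols D"
  unfolding coherence_def using finite_gram_abs_set by (intro Max_ge) auto

lemma abs_gram_le_coherence:
  assumes "a < ncols" "b < ncols" "a \<noteq> b"
  shows "\<bar>\<Sum>i<nrows. D i a * D i b\<bar> \<le> coherence nrows ncols D"
  unfolding coherence_def using finite_gram_abs_set assms by (intro Max_ge) auto

lemma matT_vec_mat_vec_unit_column:
  assumes "a < ncols" "(\<Sum>i<nrows. (D i a)\<^sup>2) = 1"
  shows "matT_vec nrows D (\<lambda>i. mat_vec ncols D g i + e i) a
     = g a + (\<Sum>b\<in>{..<ncols} - {a}. (\<Sum>i<nrows. D i a * D i b) * g b) + (\<Sum>i<nrows. D i a * e i)"
proof -
  have "matT_vec nrows D (\<lambda>i. mat_vec ncols D g i + e i) a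
      = (\<Sum>i<nrows. \<Sum>b<ncols. D i a * D i b * g b) + (\<Sum>i<nrows. D i a * e i)"
    unfolding matT_vec_def mat_vec_def
    by (simp add: distrib_left sum.distrib sum_distrib_left mult.assoc)
  also have "(\<Sum>i<nrows. \<Sum>b<ncols. D i a * D i b * g b) = (\<Sum>b<ncols. (\<Sum>i<nrows. D i a * D i b) * g b)"
    by (subst sum.swap) (simp add: sum_distrib_right)
  also have "(\<Sum>b<ncols. (\<Sum>i<nrows. D i a * D i b) * g b)
      = (\<Sum>i<nrows. (D i a)\<^sup>2) * g a + (\<Sum>b\<in>{..<ncols} - {a}. (\<Sum>i<nrows. D i a * D i b) * g b)"
    using assms(1) by (subst sum.remove[of _ a]) (auto simp: power2_eq_square)
  finally show ?thesis using assms(2) by simp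
qed

lemma abs_offdiag_gram_sum_le:
  assumes "finite S" "S \<subseteq> {..<ncols}" "a < ncols"
    and orth: "\<And>b. b < ncols \<Longrightarrow> b \<notin> S \<Longrightarrow> (\<Sum>i<nrows. D i a * D i b) = 0"
    and bound: "\<And>b. b < ncols \<Longrightarrow> \<bar>g b\<bar> \<le> gmax"
  shows "\<bar>\<Sum>b\<in>{..<ncols} - {a}. (\<Sum>i<nrows. D i a * D i b) * g b\<bar>
     \<le> coherence nrows ncols D * gmax * card ({b \<in> S. g b \<noteq> 0} - {a})"
proof -
  define T where "T = {b \<in> S. g b \<noteq> 0} - {a}"
  have T: "T \<subseteq> {..<ncols} - {a}" "finite T" unfolding T_def using assms(1,2) by auto
  have "(\<Sum>b\<in>{..<ncols} - {a}. (\<Sum>i<nrows. D i a * D i b) * g b)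
      = (\<Sum>b\<in>T. (\<Sum>i<nrows. D i a * D i b) * g b)"
    using T orth by (intro sum.mono_neutral_right) (auto simp: T_def)
  also have "\<bar>\<dots>\<bar> \<le> (\<Sum>b\<in>T. coherence nrows ncols D * gmax)"
  proof (rule order_trans[OF sum_abs sum_mono])
    fix b assume "b \<in> T"
    then have "\<bar>\<Sum>i<nrows. D i a * D i b\<bar> \<le> coherence nrows ncols D" "\<bar>g b\<bar> \<le> gmax"
      using T assms(3) bound by (auto intro: abs_gram_le_coherence)
    then show "\<bar>(\<Sum>i<nrows. D i a * D i b) * g b\<bar> \<le> coherence nrows ncols D * gmax"
      unfolding abs_mult by (intro mult_mono) auto
  qed
  finally show ?thesis by (simp add: T_def mult_ac)
qed

lemma finite_abs_nonzero_set:
  fixes g :: "nat \<Rightarrow> real"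
  shows "finite {\<bar>g a\<bar> | a. a < n \<and> g a \<noteq> 0}"
  by (rule finite_subset[of _ "(\<lambda>a. \<bar>g a\<bar>) ` {..<n}"]) auto

lemma abs_le_Max_abs_nonzero:
  fixes g :: "nat \<Rightarrow> real"
  assumes "b < n" "\<exists>a<n. g a \<noteq> 0"
  shows "\<bar>g b\<bar> \<le> Max {\<bar>g a\<bar> | a. a < n \<and> g a \<noteq> 0}"
proof (cases "g b = 0")
  case True
  from assms(2) obtain a where "a < n" "g a \<noteq> 0" by blast
  then have "\<bar>g a\<bar> \<le> Max {\<bar>g a\<bar> | a. a < n \<and> g a \<noteq> 0}"
    using finite_abs_nonzero_set by (intro Max_ge) auto
  with True show ?thesis by simp
next
  case False
  with assms(1) show ?thesis using finite_abs_nonzero_set by (intro Max_ge) auto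
qed

lemma Min_abs_nonzero_le:
  fixes g :: "nat \<Rightarrow> real"
  assumes "b < n" "g b \<noteq> 0"
  shows "Min {\<bar>g a\<bar> | a. a < n \<and> g a \<noteq> 0} \<le> \<bar>g b\<bar>"
  using assms finite_abs_nonzero_set by (intro Min_le) auto

lemma hard_thr_support_eq:
  assumes "0 \<le> \<beta>"
    and "\<And>a. a < n \<Longrightarrow> g a \<noteq> 0 \<Longrightarrow> \<beta> < \<bar>x a\<bar>"
    and "\<And>a. a < n \<Longrightarrow> g a = 0 \<Longrightarrow> \<bar>x a\<bar> \<le> \<beta>"
  shows "{a. a < n \<and> hard_thr \<beta> x a \<noteq> 0} = {a. a < n \<and> g a \<noteq> 0}"
  using assms unfolding hard_thr_def by force

lemma norm2_inf_patch_le_sqrt_norm0_inf_patch: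
  assumes "0 < N" "0 \<le> B"
    and "\<And>a. a < N * m \<Longrightarrow> g a = 0 \<Longrightarrow> v a = 0"
    and "\<And>a. a < N * m \<Longrightarrow> g a \<noteq> 0 \<Longrightarrow> \<bar>v a\<bar> \<le> B"
  shows "norm2_inf_patch N m n v \<le> sqrt (real (norm0_inf_patch N m n g)) * B"
proof -
  have "sqrt (\<Sum>a\<in>patch_idx N m n j. (v a)\<^sup>2) \<le> sqrt (real (norm0_inf_patch N m n g)) * B"
    if "j < N" for j
  proof -
    define P where "P = patch_idx N m n j"
    define Q where "Q = {a \<in> P. g a \<noteq> 0}"
    have P: "finite P" "P \<subseteq> {..<N * m}"
      unfolding P_def using finite_patch_idx patch_idx_subset assms(1) by auto
    have "(\<Sum>a\<in>P. (v a)\<^sup>2) = (\<Sum>a\<in>Q. (v a)\<^sup>2)"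
      using P assms(3) by (intro sum.mono_neutral_right) (auto simp: Q_def)
    also have "\<dots> \<le> (\<Sum>a\<in>Q. B\<^sup>2)"
    proof (rule sum_mono)
      fix a assume "a \<in> Q"
      then have "\<bar>v a\<bar> \<le> B" using P assms(4) by (auto simp: Q_def)
      then show "(v a)\<^sup>2 \<le> B\<^sup>2" using power_mono[of "\<bar>v a\<bar>" B 2] by simp
    qed
    also have "\<dots> \<le> real (norm0_inf_patch N m n g) * B\<^sup>2"
      using norm0_inf_patch_ge[OF that] unfolding Q_def P_def by (simp add: mult_right_mono)
    finally have "sqrt (\<Sum>a\<in>P. (v a)\<^sup>2) \<le> sqrt (real (norm0_inf_patch N m n g) * B\<^sup>2)"
      by (rule real_sqrt_le_mono)
    then show ?thesis using assms(2) by (simp add: P_def real_sqrt_mult)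
  qed
  then show ?thesis unfolding norm2_inf_patch_def using assms(1) by (subst Max_le_iff) auto
qed

lemma abs_conv_dict_noise_le:
  assumes "0 < m" "a < N * m" "(\<Sum>i<N. (conv_dict N n0 m f i a)\<^sup>2) = 1"
  shows "\<bar>\<Sum>i<N. conv_dict N n0 m f i a * e i\<bar> \<le> norm2_inf_patch N 1 n0 e"
proof -
  have k: "a div m < N" using assms by (simp add: less_mult_imp_div_less)
  have "\<bar>\<Sum>i<N. conv_dict N n0 m f i a * e i\<bar> \<le> sqrt (\<Sum>i\<in>patch_idx N 1 n0 (a div m). (e i)\<^sup>2)"
  proof (rule abs_sum_mult_le_sqrt_sum_sq)
    show "patch_idx N 1 n0 (a div m) \<subseteq> {..<N}" using patch_idx_subset[of N 1] k by simp
    show "conv_dict N n0 m f i a = 0" if "i \<in> {..<N} - patch_idx N 1 n0 (a div m)" for i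
      using conv_dict_column_support[OF k] that by blast
  qed (use assms(3) in auto)
  also have "\<dots> \<le> norm2_inf_patch N 1 n0 e" using k by (rule norm2_inf_patch_ge)
  finally show ?thesis .
qed

lemma conv_correlation_error:
  assumes "0 < m" "a < N * m" "(\<Sum>i<N. (conv_dict N n0 m f i a)\<^sup>2) = 1"
    and "\<And>b. b < N * m \<Longrightarrow> \<bar>g b\<bar> \<le> gmax"
  shows "\<bar>matT_vec N (conv_dict N n0 m f) (\<lambda>i. mat_vec (N * m) (conv_dict N n0 m f) g i + e i) a - g a\<bar>
    \<le> coherence N (N * m) (conv_dict N n0 m f) * gmax
        * card ({b \<in> stripe_idx N m n0 (a div m). g b \<noteq> 0} - {a})
      + norm2_inf_patch N 1 n0 e"
proof -
  let ?D = "conv_dict N n0 m f"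
  have N: "0 < N" using assms(2) by (cases N) auto
  have orth: "(\<Sum>i<N. ?D i a * ?D i b) = 0" if "b < N * m" "b \<notin> stripe_idx N m n0 (a div m)" for b
    using conv_dict_overlap_in_stripe[OF assms(1,2) that(1)] that(2) by (intro sum.neutral) auto
  have "\<bar>\<Sum>b\<in>{..<N * m} - {a}. (\<Sum>i<N. ?D i a * ?D i b) * g b\<bar>
      \<le> coherence N (N * m) ?D * gmax * card ({b \<in> stripe_idx N m n0 (a div m). g b \<noteq> 0} - {a})"
    using finite_stripe_idx stripe_idx_subset[OF N] assms(2) orth assms(4)
    by (rule abs_offdiag_gram_sum_le)
  moreover have "\<bar>\<Sum>i<N. ?D i a * e i\<bar> \<le> norm2_inf_patch N 1 n0 e"
    using assms(1-3) by (rule abs_conv_dict_noise_le)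
  ultimately show ?thesis
    unfolding matT_vec_mat_vec_unit_column[where D = ?D, OF assms(2,3)] by linarith
qed

lemma conv_correlation_error_on_support:
  assumes "0 < m" "1 \<le> n0" "a < N * m" "g a \<noteq> 0" "(\<Sum>i<N. (conv_dict N n0 m f i a)\<^sup>2) = 1"
    and "\<And>b. b < N * m \<Longrightarrow> \<bar>g b\<bar> \<le> gmax"
  shows "\<bar>matT_vec N (conv_dict N n0 m f) (\<lambda>i. mat_vec (N * m) (conv_dict N n0 m f) g i + e i) a - g a\<bar>
    \<le> coherence N (N * m) (conv_dict N n0 m f) * gmax * (real (norm0_inf_stripe N m n0 g) - 1)
      + norm2_inf_patch N 1 n0 e"
proof -
  define X where "X = {b \<in> stripe_idx N m n0 (a div m). g b \<noteq> 0}"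
  have "a \<in> X" "finite X" unfolding X_def using mem_stripe_idx_self assms(1-4) finite_stripe_idx by auto
  moreover have "card X \<le> norm0_inf_stripe N m n0 g" unfolding X_def using assms(1,3)
    by (intro norm0_inf_stripe_ge) (simp add: less_mult_imp_div_less)
  moreover have "0 < card X" using \<open>a \<in> X\<close> \<open>finite X\<close> card_gt_0_iff by blast
  ultimately have "real (card (X - {a})) \<le> real (norm0_inf_stripe N m n0 g) - 1"
    by (simp add: of_nat_diff)
  moreover have "0 \<le> coherence N (N * m) (conv_dict N n0 m f) * gmax"
    using coherence_nonneg assms(3,6) by (meson abs_ge_zero order_trans mult_nonneg_nonneg)
  ultimately have "coherence N (N * m) (conv_dict N n0 m f) * gmax * card (X - {a})
      \<le> coherence N (N * m) (conv_dict N n0 m f) * gmax * (real (norm0_inf_stripe N m n0 g) - 1)"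
    by (rule mult_left_mono)
  then show ?thesis
    using conv_correlation_error[where g = g and gmax = gmax and e = e, OF assms(1,3,5,6)]
    unfolding X_def[symmetric] by linarith
qed

lemma conv_correlation_off_support:
  assumes "0 < m" "a < N * m" "g a = 0" "(\<Sum>i<N. (conv_dict N n0 m f i a)\<^sup>2) = 1"
    and "\<And>b. b < N * m \<Longrightarrow> \<bar>g b\<bar> \<le> gmax"
  shows "\<bar>matT_vec N (conv_dict N n0 m f) (\<lambda>i. mat_vec (N * m) (conv_dict N n0 m f) g i + e i) a\<bar>
    \<le> coherence N (N * m) (conv_dict N n0 m f) * gmax * real (norm0_inf_stripe N m n0 g)
      + norm2_inf_patch N 1 n0 e"
proof -
  define X where "X = {b \<in> stripe_idx N m n0 (a div m). g b \<noteq> 0}"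
  have "card (X - {a}) \<le> card X" unfolding X_def using finite_stripe_idx by (intro card_mono) auto
  also have "card X \<le> norm0_inf_stripe N m n0 g" unfolding X_def using assms(1,2)
    by (intro norm0_inf_stripe_ge) (simp add: less_mult_imp_div_less)
  finally have "real (card (X - {a})) \<le> real (norm0_inf_stripe N m n0 g)" by simp
  moreover have "0 \<le> coherence N (N * m) (conv_dict N n0 m f) * gmax"
    using coherence_nonneg assms(2,5) by (meson abs_ge_zero order_trans mult_nonneg_nonneg)
  ultimately have "coherence N (N * m) (conv_dict N n0 m f) * gmax * card (X - {a})
      \<le> coherence N (N * m) (conv_dict N n0 m f) * gmax * real (norm0_inf_stripe N m n0 g)"
    by (rule mult_left_mono)
  then show ?thesis
    using conv_correlation_error[where g = g and gmax = gmax and e = e, OF assms(1,2,4,5)] assms(3) unfolding X_def[symmetric]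
    by linarith
qed

theorem lemma1:
  fixes N n0 n1 m1 :: nat
    and f :: "nat \<Rightarrow> nat \<Rightarrow> real"
    and Gamma E :: "nat \<Rightarrow> real"
    and eps0 beta1 :: real
  assumes "1 \<le> n0" and "n0 \<le> N" and "1 \<le> m1" and "1 \<le> n1"
    and unit_cols: "\<forall>a < N * m1. (\<Sum>i<N. (conv_dict N n0 m1 f i a)\<^sup>2) = 1"
    and nonzero: "\<exists>a < N * m1. Gamma a \<noteq> 0"
    and noise: "norm2_inf_patch N 1 n0 E \<le> eps0"
    and cond_a: "real (norm0_inf_stripe N m1 n0 Gamma) <
        1/2 * (1 + 1 / coherence N (N * m1) (conv_dict N n0 m1 f)
               * (Min {\<bar>Gamma a\<bar> | a. a < N * m1 \<and> Gamma a \<noteq> 0}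
                  / Max {\<bar>Gamma a\<bar> | a. a < N * m1 \<and> Gamma a \<noteq> 0}))
        - 1 / coherence N (N * m1) (conv_dict N n0 m1 f)
          * (eps0 / Max {\<bar>Gamma a\<bar> | a. a < N * m1 \<and> Gamma a \<noteq> 0})"
    and cond_b1: "Min {\<bar>Gamma a\<bar> | a. a < N * m1 \<and> Gamma a \<noteq> 0}
        - (real (norm0_inf_stripe N m1 n0 Gamma) - 1) * coherence N (N * m1) (conv_dict N n0 m1 f)
          * Max {\<bar>Gamma a\<bar> | a. a < N * m1 \<and> Gamma a \<noteq> 0} - eps0 > beta1"
    and cond_b2: "beta1 > real (norm0_inf_stripe N m1 n0 Gamma) * coherence N (N * m1) (conv_dict N n0 m1 f)
          * Max {\<bar>Gamma a\<bar> | a. a < N * m1 \<and> Gamma a \<noteq> 0} + eps0"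
  shows "{a. a < N * m1 \<and> hard_thr beta1 (matT_vec N (conv_dict N n0 m1 f)
              (\<lambda>i. mat_vec (N * m1) (conv_dict N n0 m1 f) Gamma i + E i)) a \<noteq> 0}
         = {a. a < N * m1 \<and> Gamma a \<noteq> 0}
     \<and> norm2_inf_patch N m1 n1 (\<lambda>a. Gamma a - hard_thr beta1 (matT_vec N (conv_dict N n0 m1 f)
              (\<lambda>i. mat_vec (N * m1) (conv_dict N n0 m1 f) Gamma i + E i)) a)
       \<le> sqrt (real (norm0_inf_patch N m1 n1 Gamma))
         * (eps0 + coherence N (N * m1) (conv_dict N n0 m1 f)
              * (real (norm0_inf_stripe N m1 n0 Gamma) - 1)
              * Max {\<bar>Gamma a\<bar> | a. a < N * m1 \<and> Gamma a \<noteq> 0})"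
proof -
  let ?D = "conv_dict N n0 m1 f"
  define est where "est = matT_vec N ?D (\<lambda>i. mat_vec (N * m1) ?D Gamma i + E i)"
  define mu where "mu = coherence N (N * m1) ?D"
  define s where "s = real (norm0_inf_stripe N m1 n0 Gamma)"
  define gmax where "gmax = Max {\<bar>Gamma a\<bar> | a. a < N * m1 \<and> Gamma a \<noteq> 0}"
  have m1: "0 < m1" and N: "0 < N" using assms(1-3) by auto
  have gmax: "\<And>b. b < N * m1 \<Longrightarrow> \<bar>Gamma b\<bar> \<le> gmax"
    unfolding gmax_def using nonzero by (intro abs_le_Max_abs_nonzero)
  have on: "\<bar>est a - Gamma a\<bar> \<le> mu * gmax * (s - 1) + eps0" if "a < N * m1" "Gamma a \<noteq> 0" for a
    using conv_correlation_error_on_support[where g = Gamma and e = E,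
        OF m1 assms(1) that unit_cols[rule_format, OF that(1)] gmax] noise unfolding est_def mu_def s_def by linarith
  have off: "\<bar>est a\<bar> \<le> mu * gmax * s + eps0" if "a < N * m1" "Gamma a = 0" for a
    using conv_correlation_off_support[where g = Gamma and e = E,
        OF m1 that unit_cols[rule_format, OF that(1)] gmax] noise unfolding est_def mu_def s_def by linarith
  have on_above: "beta1 < \<bar>est a\<bar>" if "a < N * m1" "Gamma a \<noteq> 0" for a
    using on[OF that] Min_abs_nonzero_le[where g = Gamma, OF that] cond_b1
    unfolding gmax_def[symmetric] mu_def[symmetric] s_def[symmetric]
    by (simp add: mult_ac)
  have off_below: "\<bar>est a\<bar> < beta1" if "a < N * m1" "Gamma a = 0" for a
    using off[OF that] cond_b2 unfolding gmax_def[symmetric] mu_def[symmetric] s_def[symmetric]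
    by (simp add: mult_ac)
  have "0 \<le> eps0" using norm2_inf_patch_nonneg[OF N] noise by (rule order_trans)
  moreover have "0 \<le> s * mu * gmax"
    using gmax[of 0] N m1 coherence_nonneg unfolding s_def mu_def
    by (intro mult_nonneg_nonneg) (auto intro: order_trans[OF abs_ge_zero])
  ultimately have "0 \<le> beta1"
    using cond_b2 unfolding gmax_def[symmetric] mu_def[symmetric] s_def[symmetric] by linarith
  show ?thesis
  proof (fold est_def mu_def s_def gmax_def, intro conjI)
    show "{a. a < N * m1 \<and> hard_thr beta1 est a \<noteq> 0} = {a. a < N * m1 \<and> Gamma a \<noteq> 0}"
      using \<open>0 \<le> beta1\<close> on_above off_below by (intro hard_thr_support_eq) (auto intro: less_imp_le)
    obtain a where a: "a < N * m1" "Gamma a \<noteq> 0" using nonzero by blast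
    have B: "0 \<le> eps0 + mu * (s - 1) * gmax"
      using on[OF a] abs_ge_zero[of "est a - Gamma a"] by (simp add: mult_ac)
    show "norm2_inf_patch N m1 n1 (\<lambda>a. Gamma a - hard_thr beta1 est a)
        \<le> sqrt (real (norm0_inf_patch N m1 n1 Gamma)) * (eps0 + mu * (s - 1) * gmax)"
    proof (rule norm2_inf_patch_le_sqrt_norm0_inf_patch[OF N])
      show "Gamma a - hard_thr beta1 est a = 0" if "a < N * m1" "Gamma a = 0" for a
        using off_below[OF that] that(2) by (simp add: hard_thr_def)
      show "\<bar>Gamma a - hard_thr beta1 est a\<bar> \<le> eps0 + mu * (s - 1) * gmax"
        if "a < N * m1" "Gamma a \<noteq> 0" for a
        using on[OF that] on_above[OF that] by (simp add: hard_thr_def abs_minus_commute mult_ac)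
    qed (fact B)
  qed
qed

end
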